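(* Let $q,z,m$ be positive integers with $q\geq 2$ and $z<q$, and put $L=\lfloor\frac{q-1}{q-z}\rfloor$. Index rows by $\mathbf{a}=(a_0,\ldots,a_{m-1})\in\mathbb{Z}_q^m$. Define the $q^m\times mLq$ array $\mathbf{P}=(p_{\mathbf{a},(b,\delta,\varepsilon)})$ with columns $(b,\delta,\varepsilon)$, $b\in\mathbb{Z}_q$, $0\leq\delta<m$, $\varepsilon\in\{0,\ldots,L-1\}$, by: $p_{\mathbf{a},(b,\delta,\varepsilon)}=*$ if $a_\delta\in\{b,b-1,\ldots,b-(z-1)\}$, and otherwise $p_{\mathbf{a},(b,\delta,\varepsilon)}=(a_0,\ldots,a_{\delta-1},\,b-\varepsilon(q-z),\,a_{\delta+1},\ldots,a_{m-1},\,a_\delta-b-1)$. Define the $q^m\times q$ array $\mathbf{C}=(c_{\mathbf{a},(b,m)})$ with columns $(b,m)$, $b\in\mathbb{Z}_q$, by: $c_{\mathbf{a},(b,m)}=*$ if $\sum_{l=0}^{m-1}a_l\in\{b,b+1,\ldots,b+(z-1)\}$, and otherwise $c_{\mathbf{a},(b,m)}=(a_0,\ldots,a_{m-1},\,b-\sum_{l=0}^{m-1}a_l-1)$. All arithmetic is modulo $q$. Then $(\mathbf{P},\mathbf{C})$ (the columns of $\mathbf{P}$ followed by those of $\mathbf{C}$) is an $\big((mL+1)q,\ q^m,\ zq^{m-1},\ (q-z)q^m\big)$ placement delivery array. In particular the associated coded caching scheme has $\frac{M}{N}=\frac{z}{q}$ and rate $R=q-z$.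
   Context: A $(K,F,Z,S)$ placement delivery array (PDA) is an $F\times K$ array whose entries are either a special symbol $*$ or one of $S$ distinct non-star symbols (identified with $1,\ldots,S$), such that: (C1) $*$ appears exactly $Z$ times in each column; (C2) each of the $S$ symbols occurs at least once; (C3) for any two distinct entries $p_{j_1,k_1}=p_{j_2,k_2}=s$ with $s$ a non-star symbol, we have $j_1\neq j_2$, $k_1\neq k_2$, and $p_{j_1,k_2}=p_{j_2,k_1}=*$. A $(K,F,Z,S)$ PDA yields an $F$-division coded caching scheme for $K$ users with memory ratio $M/N=Z/F$ and rate $R=S/F$. The non-star symbols here are vectors in $\mathbb{Z}_q^{m+1}$. *)

theory Defs
  imports Complex_Main
begin

text \<open>A placement delivery array given by a row set (size F), a column set (size K)
  and an entry function; None plays the role of the star symbol, Some s a non-star symbol.\<close>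
definition is_PDA ::
  "'r set \<Rightarrow> 'c set \<Rightarrow> ('r \<Rightarrow> 'c \<Rightarrow> 's option) \<Rightarrow> nat \<Rightarrow> nat \<Rightarrow> nat \<Rightarrow> nat \<Rightarrow> bool" where
  "is_PDA Rows Cols p K F Z S \<longleftrightarrow>
     finite Rows \<and> finite Cols \<and> card Cols = K \<and> card Rows = F \<and>
     (\<forall>k\<in>Cols. card {j\<in>Rows. p j k = None} = Z) \<and>
     card {s. \<exists>j\<in>Rows. \<exists>k\<in>Cols. p j k = Some s} = S \<and>
     (\<forall>j1\<in>Rows. \<forall>k1\<in>Cols. \<forall>j2\<in>Rows. \<forall>k2\<in>Cols. \<forall>s.
        (j1, k1) \<noteq> (j2, k2) \<and> p j1 k1 = Some s \<and> p j2 k2 = Some s \<longrightarrow>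
        j1 \<noteq> j2 \<and> k1 \<noteq> k2 \<and> p j1 k2 = None \<and> p j2 k1 = None)"

definition modq :: "nat \<Rightarrow> int \<Rightarrow> nat" where
  "modq q x = nat (x mod int q)"

definition rows :: "nat \<Rightarrow> nat \<Rightarrow> nat list set" where
  "rows q m = {a. length a = m \<and> (\<forall>x\<in>set a. x < q)}"

definition L_of :: "nat \<Rightarrow> nat \<Rightarrow> nat" where
  "L_of q z = (q - 1) div (q - z)"

text \<open>Columns: Inl (b, delta, eps) for the array P, Inr b for the array C (column (b,m)).\<close>
definition cols :: "nat \<Rightarrow> nat \<Rightarrow> nat \<Rightarrow> ((nat \<times> nat \<times> nat) + nat) set" where
  "cols q z m = Inl ` ({..<q} \<times> {..<m} \<times> {..<L_of q z}) \<union> Inr ` {..<q}"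

definition P_entry :: "nat \<Rightarrow> nat \<Rightarrow> nat list \<Rightarrow> nat \<Rightarrow> nat \<Rightarrow> nat \<Rightarrow> nat list option" where
  "P_entry q z a b \<delta> \<epsilon> =
     (if \<exists>i<z. a ! \<delta> = modq q (int b - int i) then None
      else Some (a[\<delta> := modq q (int b - int \<epsilon> * (int q - int z))]
                 @ [modq q (int (a ! \<delta>) - int b - 1)]))"

definition C_entry :: "nat \<Rightarrow> nat \<Rightarrow> nat list \<Rightarrow> nat \<Rightarrow> nat list option" where
  "C_entry q z a b =
     (if \<exists>i<z. modq q (int (sum_list a)) = modq q (int b + int i) then None
      else Some (a @ [modq q (int b - int (sum_list a) - 1)]))"

definition PC_array :: "nat \<Rightarrow> nat \<Rightarrow> nat list \<Rightarrow> (nat \<times> nat \<times> nat) + nat \<Rightarrow> nat list option" where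
  "PC_array q z a c = (case c of Inl (b, \<delta>, \<epsilon>) \<Rightarrow> P_entry q z a b \<delta> \<epsilon>
                              | Inr b \<Rightarrow> C_entry q z a b)"

end

theory Submission
  imports Defs
begin

(* Write w = q - z.  Row a has a star in the P-column (b, \<delta>, \<epsilon>) iff b - a_\<delta> lies in the
   cyclic window {0, ..., z - 1}, and in the C-column b iff (\<Sigma> a) - b does; since a_\<delta> (resp.
   \<Sigma> a) is equidistributed over Z_q, every column has z q^(m-1) stars.  A non-star symbol is a
   vector of Z_q^m followed by an entry below w, and the C-columns already produce all of these,
   so there are w q^m symbols.  For the exchange condition, a common symbol shows that the other
   row sits at cyclic distance \<epsilon> w < z from b (the shifts satisfy (L - 1) w < z by the choice of
   L); when two P-columns share \<delta>, the two distances differ by a nonzero multiple of w of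
   absolute value below z, which again lands in the window. *)

lemma int_modq: "0 < q \<Longrightarrow> int (modq q x) = x mod int q"
  by (simp add: modq_def)

lemma modq_less: "0 < q \<Longrightarrow> modq q x < q"
  by (simp add: modq_def nat_less_iff)

lemma modq_less_iff: "0 < q \<Longrightarrow> modq q x < z \<longleftrightarrow> x mod int q < int z"
  by (simp add: modq_def nat_less_iff)

lemma modq_of_nat: "a < q \<Longrightarrow> modq q (int a) = a"
  by (simp add: modq_def nat_mod_as_int[symmetric])

lemma modq_eq_iff: "0 < q \<Longrightarrow> modq q x = modq q y \<longleftrightarrow> x mod int q = y mod int q"
  by (metis int_modq of_nat_eq_iff)

lemma eq_modq_diff_iff:
  assumes "0 < q" "a < q"
  shows "a = modq q (y - int i) \<longleftrightarrow> modq q y = modq q (int a + int i)"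
proof -
  have "a = modq q (y - int i) \<longleftrightarrow> int a mod int q = (y - int i) mod int q"
    using modq_eq_iff[OF assms(1)] modq_of_nat[OF assms(2)] by metis
  also have "\<dots> \<longleftrightarrow> int q dvd (y - (int a + int i))"
    by (metis mod_eq_dvd_iff dvd_minus_iff minus_diff_eq diff_diff_eq2 diff_diff_eq add.commute)
  also have "\<dots> \<longleftrightarrow> modq q y = modq q (int a + int i)"
    using modq_eq_iff[OF assms(1)] by (simp add: mod_eq_dvd_iff)
  finally show ?thesis .
qed

lemma modq_window_iff:
  assumes "0 < q" "z \<le> q"
  shows "(\<exists>i<z. modq q x = modq q (y + int i)) \<longleftrightarrow> (x - y) mod int q < int z"
proof
  assume "\<exists>i<z. modq q x = modq q (y + int i)"
  then obtain i where "i < z" "x mod int q = (y + int i) mod int q"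
    using modq_eq_iff[OF assms(1)] by blast
  then have "(x - y) mod int q = int i"
    using assms by (metis add_diff_cancel_left' mod_diff_left_eq mod_pos_pos_trivial
        of_nat_0_le_iff of_nat_less_iff order_less_le_trans)
  with \<open>i < z\<close> show "(x - y) mod int q < int z" by simp
next
  assume window: "(x - y) mod int q < int z"
  define i where "i = nat ((x - y) mod int q)"
  have "x mod int q = (y + int i) mod int q"
    using assms by (simp add: i_def mod_add_right_eq)
  moreover have "i < z" using window assms by (simp add: i_def nat_less_iff)
  ultimately show "\<exists>i<z. modq q x = modq q (y + int i)"
    using modq_eq_iff[OF assms(1)] by blast
qed

lemma modq_pred_diff_less:
  assumes "0 < q" "int z \<le> (y - x) mod int q"
  shows "modq q (x - y - 1) < q - z"
proof -
  define u where "u = (y - x) mod int q"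
  have "(x - y - 1) mod int q = (- u - 1) mod int q"
    unfolding u_def by (metis minus_diff_eq mod_diff_left_eq mod_minus_eq)
  also have "\<dots> = (int q - 1 - u - int q) mod int q"
    by (rule arg_cong[of _ _ "\<lambda>t. t mod int q"]) simp
  also have "\<dots> = (int q - 1 - u) mod int q" by (rule minus_mod_self2)
  also have "\<dots> = int q - 1 - u"
    using assms by (intro mod_pos_pos_trivial) (auto simp: u_def)
  finally show ?thesis using assms by (simp add: modq_def u_def nat_less_iff)
qed

lemma P_entry_eq:
  assumes "0 < q" "z \<le> q" "a ! \<delta> < q"
  shows "P_entry q z a b \<delta> \<epsilon> =
    (if (int b - int (a ! \<delta>)) mod int q < int z then None
     else Some (a[\<delta> := modq q (int b - int (\<epsilon> * (q - z)))]
                @ [modq q (int (a ! \<delta>) - int b - 1)]))"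
  using eq_modq_diff_iff[OF assms(1,3)] modq_window_iff[OF assms(1,2)] assms(2)
  by (simp add: P_entry_def of_nat_diff)

lemma C_entry_eq:
  assumes "0 < q" "z \<le> q"
  shows "C_entry q z a b =
    (if (int (sum_list a) - int b) mod int q < int z then None
     else Some (a @ [modq q (int b - int (sum_list a) - 1)]))"
  using modq_window_iff[OF assms] by (simp add: C_entry_def)

lemma rows_eq_lists: "rows q m = {xs. set xs \<subseteq> {..<q} \<and> length xs = m}"
  unfolding rows_def by auto

lemma finite_rows: "finite (rows q m)"
  by (simp add: rows_eq_lists finite_lists_length_eq)

lemma card_rows: "card (rows q m) = q ^ m"
  by (simp add: rows_eq_lists card_lists_length_eq)

lemma list_update_in_rows: "a \<in> rows q m \<Longrightarrow> x < q \<Longrightarrow> a[\<delta> := x] \<in> rows q m"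
  unfolding rows_def using set_update_subset_insert by fastforce

lemma bij_betw_rows_coord_shift:
  assumes "0 < q" "\<delta> < m" "U \<subseteq> {..<q}" "\<And>a x. c (a[\<delta> := x]) = c a"
  shows "bij_betw (\<lambda>a. (modq q (int (a ! \<delta>) + c a), a[\<delta> := 0]))
           {a \<in> rows q m. modq q (int (a ! \<delta>) + c a) \<in> U} (U \<times> {a \<in> rows q m. a ! \<delta> = 0})"
    (is "bij_betw ?decompose ?fibre (U \<times> ?Z)")
proof (rule bij_betw_byWitness[where f' = "\<lambda>(t, a). a[\<delta> := modq q (int t - c a)]"])
  have modq_cancel: "modq q (int (modq q x) + y) = modq q (x + y)"
    "modq q (int (modq q x) - y) = modq q (x - y)" for x y
    using assms(1) by (simp_all add: int_modq modq_def mod_simps)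
  have coord: "\<delta> < length a" "a ! \<delta> < q" if "a \<in> rows q m" for a
    using that assms(2) by (auto simp: rows_def)
  show "\<forall>a\<in>?fibre. (\<lambda>(t, a). a[\<delta> := modq q (int t - c a)]) (?decompose a) = a"
  proof
    fix a assume "a \<in> ?fibre"
    then have "modq q (int (modq q (int (a ! \<delta>) + c a)) - c a) = a ! \<delta>"
      using coord modq_cancel modq_of_nat by simp
    then show "(\<lambda>(t, a). a[\<delta> := modq q (int t - c a)]) (?decompose a) = a"
      by (simp add: assms(4))
  qed
  show "\<forall>p\<in>U \<times> ?Z. ?decompose ((\<lambda>(t, a). a[\<delta> := modq q (int t - c a)]) p) = p"
  proof
    fix p assume "p \<in> U \<times> ?Z"
    then obtain t a where p: "p = (t, a)" "t \<in> U" "a \<in> rows q m" "a ! \<delta> = 0" by blast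
    moreover have "t < q" using p assms(3) by auto
    ultimately show "?decompose ((\<lambda>(t, a). a[\<delta> := modq q (int t - c a)]) p) = p"
      using coord modq_cancel modq_of_nat by (simp add: assms(4)) (metis list_update_id)
  qed
  show "?decompose ` ?fibre \<subseteq> U \<times> ?Z"
    using coord list_update_in_rows assms(1) by auto
  show "(\<lambda>(t, a). a[\<delta> := modq q (int t - c a)]) ` (U \<times> ?Z) \<subseteq> ?fibre"
  proof (rule image_subsetI)
    fix p assume "p \<in> U \<times> ?Z"
    then obtain t a where p: "p = (t, a)" "t \<in> U" "a \<in> rows q m" by blast
    moreover have "t < q" using p assms(3) by auto
    ultimately show "(\<lambda>(t, a). a[\<delta> := modq q (int t - c a)]) p \<in> ?fibre"
      using coord modq_cancel modq_of_nat list_update_in_rows modq_less[OF assms(1)]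
      by (simp add: assms(4))
  qed
qed

lemma card_rows_coord_shift:
  assumes "0 < q" "\<delta> < m" "T \<subseteq> {..<q}" "\<And>a x. c (a[\<delta> := x]) = c a"
  shows "card {a \<in> rows q m. modq q (int (a ! \<delta>) + c a) \<in> T} = card T * q ^ (m - 1)"
proof -
  let ?Z = "{a \<in> rows q m. a ! \<delta> = 0}"
  have card_fibre: "card {a \<in> rows q m. modq q (int (a ! \<delta>) + c a) \<in> U} = card U * card ?Z"
    if "U \<subseteq> {..<q}" for U
    using bij_betw_rows_coord_shift[OF assms(1,2) that assms(4)]
    by (simp add: bij_betw_same_card card_cartesian_product)
  have "{a \<in> rows q m. modq q (int (a ! \<delta>) + c a) \<in> {..<q}} = rows q m"
    using modq_less[OF assms(1)] by auto
  then have "q ^ m = q * card ?Z" using card_fibre[of "{..<q}"] by (simp add: card_rows)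
  moreover have "q ^ m = q * q ^ (m - 1)" using assms(2) by (simp add: power_eq_if)
  ultimately have "card ?Z = q ^ (m - 1)" using assms(1) by simp
  then show ?thesis using card_fibre[OF assms(3)] by simp
qed

lemma card_permuted_window:
  assumes "bij_betw \<sigma> {..<q} {..<q}" "z \<le> q"
  shows "card {t \<in> {..<q}. \<sigma> t < z} = z"
proof -
  have "bij_betw \<sigma> {t \<in> {..<q}. \<sigma> t < z} (\<sigma> ` {t \<in> {..<q}. \<sigma> t < z})"
    using assms(1) by (auto intro: bij_betw_subset)
  moreover have "\<sigma> ` {t \<in> {..<q}. \<sigma> t < z} = {..<z}"
  proof
    show "{..<z} \<subseteq> \<sigma> ` {t \<in> {..<q}. \<sigma> t < z}"
    proof
      fix u assume "u \<in> {..<z}"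
      then have "u \<in> \<sigma> ` {..<q}" using assms bij_betw_imp_surj_on by fastforce
      then show "u \<in> \<sigma> ` {t \<in> {..<q}. \<sigma> t < z}" using \<open>u \<in> {..<z}\<close> by auto
    qed
  qed auto
  ultimately show ?thesis by (simp add: bij_betw_same_card)
qed

lemma card_P_stars:
  assumes "0 < q" "z \<le> q" "\<delta> < m"
  shows "card {a \<in> rows q m. P_entry q z a b \<delta> \<epsilon> = None} = z * q ^ (m - 1)"
proof -
  let ?W = "{t \<in> {..<q}. modq q (int b - int t) < z}"
  have "{a \<in> rows q m. P_entry q z a b \<delta> \<epsilon> = None}
      = {a \<in> rows q m. modq q (int (a ! \<delta>) + 0) \<in> ?W}"
    using assms by (auto simp: P_entry_eq rows_def modq_of_nat modq_less_iff split: if_splits)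
  also have "card \<dots> = card ?W * q ^ (m - 1)"
    using assms by (intro card_rows_coord_shift) auto
  also have "card ?W = z"
  proof (rule card_permuted_window[OF _ assms(2)])
    show "bij_betw (\<lambda>t. modq q (int b - int t)) {..<q} {..<q}"
      using assms(1)
      by (intro bij_betw_byWitness[where f' = "\<lambda>t. modq q (int b - int t)"])
         (auto simp: modq_def nat_less_iff mod_diff_right_eq)
  qed
  finally show ?thesis .
qed

lemma card_C_stars:
  assumes "0 < q" "z \<le> q" "1 \<le> m"
  shows "card {a \<in> rows q m. C_entry q z a b = None} = z * q ^ (m - 1)"
proof -
  let ?W = "{t \<in> {..<q}. modq q (int t - int b) < z}"
  have "{a \<in> rows q m. C_entry q z a b = None}
      = {a \<in> rows q m. modq q (int (a ! 0) + int (sum_list (tl a))) \<in> ?W}"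
  proof -
    have "modq q (int (modq q (int (a ! 0) + int (sum_list (tl a)))) - int b) < z
        \<longleftrightarrow> (int (sum_list a) - int b) mod int q < int z" if "a \<in> rows q m" for a
      using that assms by (cases a) (auto simp: rows_def int_modq modq_less_iff mod_diff_left_eq)
    then show ?thesis
      using assms by (auto simp: C_entry_eq modq_less split: if_splits)
  qed
  also have "card \<dots> = card ?W * q ^ (m - 1)"
  proof (rule card_rows_coord_shift)
    show "int (sum_list (tl (a[0 := x]))) = int (sum_list (tl a))" for a x
      by (cases a) auto
  qed (use assms in auto)
  also have "card ?W = z"
  proof (rule card_permuted_window[OF _ assms(2)])
    show "bij_betw (\<lambda>t. modq q (int t - int b)) {..<q} {..<q}"
      using assms(1)
      by (intro bij_betw_byWitness[where f' = "\<lambda>t. modq q (int t + int b)"])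
         (auto simp: modq_def nat_less_iff mod_simps)
  qed
  finally show ?thesis .
qed

lemma shift_less:
  assumes "z < q" "\<epsilon> < L_of q z"
  shows "\<epsilon> * (q - z) < z"
proof -
  have "(\<epsilon> + 1) * (q - z) \<le> L_of q z * (q - z)"
    using assms(2) by (intro mult_right_mono) auto
  also have "\<dots> \<le> q - 1"
    unfolding L_of_def by (simp add: div_times_less_eq_dividend)
  finally show ?thesis using assms(1) by simp
qed

lemma mod_add_window:
  fixes u d Q Z :: int
  assumes "0 < Q" "Z \<le> u mod Q" "Q - Z \<le> \<bar>d\<bar>" "\<bar>d\<bar> < Z"
  shows "(u + d) mod Q < Z"
proof -
  define v where "v = u mod Q"
  have v: "Z \<le> v" "v < Q" using assms(1,2) by (simp_all add: v_def)
  have "(u + d) mod Q = (v + d) mod Q" by (simp add: v_def mod_add_left_eq)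
  also have "\<dots> < Z"
  proof (cases "0 \<le> d")
    case True
    then have "(v + d) mod Q = (v + d - Q) mod Q" by (simp add: minus_mod_self2)
    also have "\<dots> = v + d - Q" using v assms True by (intro mod_pos_pos_trivial) auto
    finally show ?thesis using v assms True by simp
  next
    case False
    then have "(v + d) mod Q = v + d" using v assms by (intro mod_pos_pos_trivial) auto
    then show ?thesis using v assms False by simp
  qed
  finally show ?thesis .
qed

lemma int_sum_list_update:
  "i < length xs \<Longrightarrow> int (sum_list (xs[i := x])) = int (sum_list xs) - int (xs ! i) + int x"
  using sum_list_update[of i xs x] elem_le_sum_list[of i xs] by simp

lemma P_entry_SomeD:
  assumes "P_entry q z a b \<delta> \<epsilon> = Some s" "0 < q" "z \<le> q" "a ! \<delta> < q"
  shows "s = a[\<delta> := modq q (int b - int (\<epsilon> * (q - z)))] @ [modq q (int (a ! \<delta>) - int b - 1)]"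
    and "int z \<le> (int b - int (a ! \<delta>)) mod int q"
  using assms(1) by (auto simp: P_entry_eq[OF assms(2-4)] split: if_splits)

lemma C_entry_SomeD:
  assumes "C_entry q z a b = Some s" "0 < q" "z \<le> q"
  shows "s = a @ [modq q (int b - int (sum_list a) - 1)]"
    and "int z \<le> (int (sum_list a) - int b) mod int q"
  using assms(1) by (auto simp: C_entry_eq[OF assms(2-3)] split: if_splits)

lemma P_entry_None_at_shift:
  assumes "z < q" "\<epsilon> < L_of q z" "a ! \<delta> = modq q (int b - int (\<epsilon> * (q - z)))"
  shows "P_entry q z a b \<delta> \<epsilon> = None"
proof -
  define E where "E = \<epsilon> * (q - z)"
  have "E < z" using shift_less[OF assms(1,2)] by (simp add: E_def)
  moreover have "(int b - int (a ! \<delta>)) mod int q = int E"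
    using assms(1,3) \<open>E < z\<close> by (simp add: E_def[symmetric] int_modq mod_diff_right_eq)
  ultimately show ?thesis
    using assms modq_less[of q] by (simp add: P_entry_eq E_def[symmetric])
qed

lemma exchange_P_P_distinct_coord:
  assumes "z < q" "a1 \<in> rows q m" "a2 \<in> rows q m" "\<delta>1 < m" "\<delta>2 < m" "\<delta>1 \<noteq> \<delta>2"
    "\<epsilon>2 < L_of q z"
    "P_entry q z a1 b1 \<delta>1 \<epsilon>1 = Some s" "P_entry q z a2 b2 \<delta>2 \<epsilon>2 = Some s"
  shows "P_entry q z a1 b2 \<delta>2 \<epsilon>2 = None"
proof -
  have "a1 ! \<delta>1 < q" "a2 ! \<delta>2 < q" "length a1 = m" "length a2 = m"
    using assms(2-5) by (auto simp: rows_def)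
  then have "a1[\<delta>1 := modq q (int b1 - int (\<epsilon>1 * (q - z)))]
      = a2[\<delta>2 := modq q (int b2 - int (\<epsilon>2 * (q - z)))]"
    using P_entry_SomeD(1)[OF assms(8)] P_entry_SomeD(1)[OF assms(9)] assms(1) by simp
  then have "a1 ! \<delta>2 = modq q (int b2 - int (\<epsilon>2 * (q - z)))"
    using assms(5,6) \<open>length a1 = m\<close> \<open>length a2 = m\<close> by (metis nth_list_update_eq nth_list_update_neq)
  then show ?thesis using P_entry_None_at_shift assms(1,7) by blast
qed

lemma exchange_C_P:
  assumes "z < q" "a2 \<in> rows q m" "\<delta>2 < m" "\<epsilon>2 < L_of q z"
    "C_entry q z a1 b1 = Some s" "P_entry q z a2 b2 \<delta>2 \<epsilon>2 = Some s"
  shows "P_entry q z a1 b2 \<delta>2 \<epsilon>2 = None"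
proof -
  have "a2 ! \<delta>2 < q" "length a2 = m" using assms(2,3) by (auto simp: rows_def)
  then have "a1 = a2[\<delta>2 := modq q (int b2 - int (\<epsilon>2 * (q - z)))]"
    using C_entry_SomeD(1)[OF assms(5)] P_entry_SomeD(1)[OF assms(6)] assms(1) by simp
  then have "a1 ! \<delta>2 = modq q (int b2 - int (\<epsilon>2 * (q - z)))"
    using assms(3) \<open>length a2 = m\<close> by simp
  then show ?thesis using P_entry_None_at_shift assms(1,4) by blast
qed

lemma C_entry_symbol_inj:
  assumes "z < q" "b1 < q" "b2 < q" "C_entry q z a1 b1 = Some s" "C_entry q z a2 b2 = Some s"
  shows "a1 = a2 \<and> b1 = b2"
proof -
  have "a1 = a2"
    and last: "modq q (int b1 - int (sum_list a1) - 1) = modq q (int b2 - int (sum_list a1) - 1)"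
    using C_entry_SomeD(1)[OF assms(4)] C_entry_SomeD(1)[OF assms(5)] assms(1) by auto
  from last have "int b1 mod int q = int b2 mod int q"
    using assms(1) by (simp add: modq_eq_iff mod_eq_dvd_iff)
  then show ?thesis using \<open>a1 = a2\<close> assms(2,3) by simp
qed

lemma exchange_P_C:
  assumes "z < q" "a1 \<in> rows q m" "\<delta>1 < m" "\<epsilon>1 < L_of q z"
    "P_entry q z a1 b1 \<delta>1 \<epsilon>1 = Some s" "C_entry q z a2 b2 = Some s"
  shows "C_entry q z a1 b2 = None"
proof -
  define E where "E = \<epsilon>1 * (q - z)"
  define x where "x = modq q (int b1 - int E)"
  have "E < z" using shift_less[OF assms(1,4)] by (simp add: E_def)
  have "a1 ! \<delta>1 < q" "\<delta>1 < length a1" using assms(2,3) by (auto simp: rows_def)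
  then have a2: "a2 = a1[\<delta>1 := x]"
    and last: "modq q (int (a1 ! \<delta>1) - int b1 - 1) = modq q (int b2 - int (sum_list a2) - 1)"
    using P_entry_SomeD(1)[OF assms(5)] C_entry_SomeD(1)[OF assms(6)] assms(1)
    by (auto simp: x_def E_def)
  have "int q dvd (int (a1 ! \<delta>1) - int b1 - 1) - (int b2 - int (sum_list a2) - 1)"
    using last assms(1) by (simp add: modq_eq_iff mod_eq_dvd_iff)
  moreover have "int x mod int q = (int b1 - int E) mod int q"
    using assms(1) by (simp add: x_def int_modq)
  then have "int q dvd int x - (int b1 - int E)" by (simp add: mod_eq_dvd_iff)
  moreover have "(int (sum_list a1) - int b2) - int E
      = ((int (a1 ! \<delta>1) - int b1 - 1) - (int b2 - int (sum_list a2) - 1))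
        - (int x - (int b1 - int E))"
    using int_sum_list_update[OF \<open>\<delta>1 < length a1\<close>, of x] a2 by simp
  ultimately have "int q dvd (int (sum_list a1) - int b2) - int E"
    by (metis dvd_diff)
  then have "(int (sum_list a1) - int b2) mod int q = int E mod int q"
    by (simp add: mod_eq_dvd_iff)
  also have "\<dots> = int E" using \<open>E < z\<close> assms(1) by simp
  finally show ?thesis
    using \<open>E < z\<close> assms(1) by (simp add: C_entry_eq E_def[symmetric])
qed

lemma exchange_P_P_same_coord:
  assumes "z < q" "a1 \<in> rows q m" "a2 \<in> rows q m" "\<delta> < m" "b1 < q" "b2 < q"
    "\<epsilon>1 < L_of q z" "\<epsilon>2 < L_of q z" "(a1, b1, \<epsilon>1) \<noteq> (a2, b2, \<epsilon>2)"
    "P_entry q z a1 b1 \<delta> \<epsilon>1 = Some s" "P_entry q z a2 b2 \<delta> \<epsilon>2 = Some s"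
  shows "P_entry q z a1 b2 \<delta> \<epsilon>2 = None"
proof -
  define E1 where "E1 = int (\<epsilon>1 * (q - z))"
  define E2 where "E2 = int (\<epsilon>2 * (q - z))"
  have coord: "a1 ! \<delta> < q" "a2 ! \<delta> < q" "\<delta> < length a1" "\<delta> < length a2"
    using assms(2-4) by (auto simp: rows_def)
  then have rest: "a1[\<delta> := modq q (int b1 - E1)] = a2[\<delta> := modq q (int b2 - E2)]"
    and last: "modq q (int (a1 ! \<delta>) - int b1 - 1) = modq q (int (a2 ! \<delta>) - int b2 - 1)"
    using P_entry_SomeD(1)[OF assms(10)] P_entry_SomeD(1)[OF assms(11)] assms(1)
    by (auto simp: E1_def E2_def)
  have window: "int z \<le> (int b1 - int (a1 ! \<delta>)) mod int q"
    using P_entry_SomeD(2)[OF assms(10)] coord assms(1) by simp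
  have "modq q (int b1 - E1) = modq q (int b2 - E2)"
    using arg_cong[OF rest, of "\<lambda>xs. xs ! \<delta>"] coord by simp
  then have shifted: "int q dvd (int b2 - E2) - (int b1 - E1)"
    using assms(1) by (simp add: modq_eq_iff mod_eq_dvd_iff dvd_diff_commute)
  have "\<epsilon>1 \<noteq> \<epsilon>2"
  proof
    assume "\<epsilon>1 = \<epsilon>2"
    then have "int b1 mod int q = int b2 mod int q"
      using shifted by (simp add: E1_def E2_def mod_eq_dvd_iff dvd_diff_commute)
    then have "b1 = b2" using assms(5,6) by simp
    then have "int (a1 ! \<delta>) mod int q = int (a2 ! \<delta>) mod int q"
      using last assms(1) by (simp add: modq_eq_iff mod_eq_dvd_iff)
    then have "a1 ! \<delta> = a2 ! \<delta>" using coord by simp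
    then have "a1 = a2" using rest by (metis list_update_id list_update_overwrite)
    then show False using assms(9) \<open>b1 = b2\<close> \<open>\<epsilon>1 = \<epsilon>2\<close> by simp
  qed
  then have "int q - int z \<le> \<bar>E2 - E1\<bar>"
    using assms(1) by (simp add: E1_def E2_def of_nat_diff abs_mult flip: left_diff_distrib)
  moreover have "\<bar>E2 - E1\<bar> < int z"
  proof -
    have "E1 < int z" "E2 < int z"
      using shift_less[OF assms(1,7)] shift_less[OF assms(1,8)]
      by (simp_all only: E1_def E2_def of_nat_less_iff)
    moreover have "0 \<le> E1" "0 \<le> E2" by (simp_all add: E1_def E2_def)
    ultimately show ?thesis by linarith
  qed
  ultimately have "((int b1 - int (a1 ! \<delta>)) + (E2 - E1)) mod int q < int z"
    using mod_add_window window assms(1) by simp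
  moreover have "(int b2 - int (a1 ! \<delta>)) mod int q = ((int b1 - int (a1 ! \<delta>)) + (E2 - E1)) mod int q"
    using shifted by (simp add: mod_eq_dvd_iff algebra_simps)
  ultimately show ?thesis
    using coord assms(1) by (simp add: P_entry_eq)
qed

lemma cols_cases:
  assumes "k \<in> cols q z m"
  obtains b \<delta> \<epsilon> where "k = Inl (b, \<delta>, \<epsilon>)" "b < q" "\<delta> < m" "\<epsilon> < L_of q z"
  | b where "k = Inr b" "b < q"
  using assms unfolding cols_def by auto

lemma finite_cols: "finite (cols q z m)"
  unfolding cols_def by simp

lemma card_cols: "card (cols q z m) = (m * L_of q z + 1) * q"
proof -
  have "card (cols q z m) = card (Inl ` ({..<q} \<times> {..<m} \<times> {..<L_of q z}) :: (_ + nat) set)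
      + card (Inr ` {..<q} :: (nat \<times> nat \<times> nat + _) set)"
    unfolding cols_def by (rule card_Un_disjoint) auto
  then show ?thesis by (simp add: card_image card_cartesian_product algebra_simps)
qed

lemma card_column_stars:
  assumes "z < q" "1 \<le> m" "k \<in> cols q z m"
  shows "card {a \<in> rows q m. PC_array q z a k = None} = z * q ^ (m - 1)"
  using assms(3)
proof (cases rule: cols_cases)
  case (1 b \<delta> \<epsilon>)
  then show ?thesis using card_P_stars[of q z \<delta> m] assms(1) by (simp add: PC_array_def)
next
  case (2 b)
  then show ?thesis using card_C_stars[of q z m] assms(1,2) by (simp add: PC_array_def)
qed

lemma PC_array_exchange:
  assumes "z < q" "a1 \<in> rows q m" "a2 \<in> rows q m" "k1 \<in> cols q z m" "k2 \<in> cols q z m"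
    "(a1, k1) \<noteq> (a2, k2)" "PC_array q z a1 k1 = Some s" "PC_array q z a2 k2 = Some s"
  shows "PC_array q z a1 k2 = None"
  using assms(4)
proof (cases rule: cols_cases)
  case k1: (1 b1 \<delta>1 \<epsilon>1)
  show ?thesis
    using assms(5)
  proof (cases rule: cols_cases)
    case k2: (1 b2 \<delta>2 \<epsilon>2)
    show ?thesis
    proof (cases "\<delta>1 = \<delta>2")
      case True
      then show ?thesis
        using exchange_P_P_same_coord[of z q a1 m a2 \<delta>2 b1 b2 \<epsilon>1 \<epsilon>2 s] assms k1 k2
        by (auto simp: PC_array_def)
    next
      case False
      then show ?thesis
        using exchange_P_P_distinct_coord[of z q a1 m a2 \<delta>1 \<delta>2 \<epsilon>2 b1 \<epsilon>1 s b2] assms k1 k2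
        by (simp add: PC_array_def)
    qed
  next
    case k2: (2 b2)
    then show ?thesis
      using exchange_P_C[of z q a1 m \<delta>1 \<epsilon>1 b1 s a2 b2] assms k1 by (simp add: PC_array_def)
  qed
next
  case k1: (2 b1)
  show ?thesis
    using assms(5)
  proof (cases rule: cols_cases)
    case k2: (1 b2 \<delta>2 \<epsilon>2)
    then show ?thesis
      using exchange_C_P[of z q a2 m \<delta>2 \<epsilon>2 a1 b1 s b2] assms k1 by (simp add: PC_array_def)
  next
    case k2: (2 b2)
    then show ?thesis
      using C_entry_symbol_inj[of z q b1 b2 a1 s a2] assms k1 by (auto simp: PC_array_def)
  qed
qed

lemma PC_array_symbol_shape:
  assumes "z < q" "a \<in> rows q m" "k \<in> cols q z m" "PC_array q z a k = Some s"
  shows "\<exists>a' t. s = a' @ [t] \<and> a' \<in> rows q m \<and> t < q - z"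
  using assms(3)
proof (cases rule: cols_cases)
  case (1 b \<delta> \<epsilon>)
  then have "a ! \<delta> < q" using assms(2) by (auto simp: rows_def)
  have entry: "P_entry q z a b \<delta> \<epsilon> = Some s"
    using assms(4) 1 by (simp add: PC_array_def)
  show ?thesis
  proof (intro exI conjI)
    show "s = a[\<delta> := modq q (int b - int (\<epsilon> * (q - z)))] @ [modq q (int (a ! \<delta>) - int b - 1)]"
      using P_entry_SomeD(1)[OF entry] \<open>a ! \<delta> < q\<close> assms(1) by simp
    show "a[\<delta> := modq q (int b - int (\<epsilon> * (q - z)))] \<in> rows q m"
      using assms(1,2) modq_less list_update_in_rows by simp
    show "modq q (int (a ! \<delta>) - int b - 1) < q - z"
      using P_entry_SomeD(2)[OF entry] \<open>a ! \<delta> < q\<close> assms(1) modq_pred_diff_less by simp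
  qed
next
  case (2 b)
  then have entry: "C_entry q z a b = Some s"
    using assms(4) by (simp add: PC_array_def)
  show ?thesis
  proof (intro exI conjI)
    show "s = a @ [modq q (int b - int (sum_list a) - 1)]"
      using C_entry_SomeD(1)[OF entry] assms(1) by simp
    show "modq q (int b - int (sum_list a) - 1) < q - z"
      using C_entry_SomeD(2)[OF entry] assms(1) modq_pred_diff_less by simp
  qed (use assms(2) in simp)
qed

lemma C_entry_realizes:
  assumes "t < q - z"
  shows "C_entry q z a (modq q (int t + 1 + int (sum_list a))) = Some (a @ [t])"
proof -
  define S where "S = int (sum_list a)"
  define b where "b = modq q (int t + 1 + S)"
  have "0 < q" using assms by simp
  have "(S - int b) mod int q = (- (int t + 1)) mod int q"
    using \<open>0 < q\<close> by (simp add: b_def int_modq mod_diff_right_eq)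
  also have "\<dots> = (int q - (int t + 1) - int q) mod int q" by simp
  also have "\<dots> = int q - (int t + 1)"
    using assms by (subst minus_mod_self2) (intro mod_pos_pos_trivial; simp)
  finally have "int z \<le> (S - int b) mod int q" using assms by simp
  moreover have "(int b - (S + 1)) mod int q = (int t + 1 + S - (S + 1)) mod int q"
    by (simp only: b_def int_modq[OF \<open>0 < q\<close>] mod_diff_left_eq)
  then have "modq q (int b - S - 1) = t"
    using assms by (simp add: modq_def diff_diff_eq)
  ultimately show ?thesis
    using \<open>0 < q\<close> assms by (simp add: C_entry_eq b_def S_def)
qed

lemma symbols_eq:
  assumes "z < q"
  shows "{s. \<exists>a\<in>rows q m. \<exists>k\<in>cols q z m. PC_array q z a k = Some s}
       = (\<lambda>(a, t). a @ [t]) ` (rows q m \<times> {..<q - z})"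
proof
  show "{s. \<exists>a\<in>rows q m. \<exists>k\<in>cols q z m. PC_array q z a k = Some s}
      \<subseteq> (\<lambda>(a, t). a @ [t]) ` (rows q m \<times> {..<q - z})"
  proof clarify
    fix s a k assume "a \<in> rows q m" "k \<in> cols q z m" "PC_array q z a k = Some s"
    then obtain a' t where "s = a' @ [t]" "a' \<in> rows q m" "t < q - z"
      using PC_array_symbol_shape[OF assms] by blast
    then show "s \<in> (\<lambda>(a, t). a @ [t]) ` (rows q m \<times> {..<q - z})" by force
  qed
  show "(\<lambda>(a, t). a @ [t]) ` (rows q m \<times> {..<q - z})
      \<subseteq> {s. \<exists>a\<in>rows q m. \<exists>k\<in>cols q z m. PC_array q z a k = Some s}"
  proof clarify
    fix a t assume "a \<in> rows q m" "t < q - z"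
    moreover have "Inr (modq q (int t + 1 + int (sum_list a))) \<in> cols q z m"
      using assms modq_less[of q] by (simp add: cols_def)
    moreover have "PC_array q z a (Inr (modq q (int t + 1 + int (sum_list a)))) = Some (a @ [t])"
      using C_entry_realizes \<open>t < q - z\<close> by (simp add: PC_array_def)
    ultimately show "\<exists>a'\<in>rows q m. \<exists>k\<in>cols q z m. PC_array q z a' k = Some (a @ [t])"
      by blast
  qed
qed

lemma card_symbols:
  assumes "z < q"
  shows "card {s. \<exists>a\<in>rows q m. \<exists>k\<in>cols q z m. PC_array q z a k = Some s} = (q - z) * q ^ m"
proof -
  have "inj_on (\<lambda>(a, t). a @ [t]) (rows q m \<times> {..<q - z})"
    by (rule inj_onI) auto
  then have "card ((\<lambda>(a, t). a @ [t]) ` (rows q m \<times> {..<q - z})) = q ^ m * (q - z)"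
    by (simp add: card_image card_cartesian_product card_rows)
  then show ?thesis
    by (simp only: symbols_eq[OF assms] mult.commute)
qed

theorem theorem5:
  fixes q z m :: nat
  assumes "q \<ge> 2" and "z \<ge> 1" and "z < q" and "m \<ge> 1"
  shows "is_PDA (rows q m) (cols q z m) (PC_array q z)
           ((m * L_of q z + 1) * q) (q ^ m) (z * q ^ (m - 1)) ((q - z) * q ^ m)
         \<and> real (z * q ^ (m - 1)) / real (q ^ m) = real z / real q
         \<and> real ((q - z) * q ^ m) / real (q ^ m) = real q - real z"
proof (intro conjI)
  have exchange: "j1 \<noteq> j2 \<and> k1 \<noteq> k2 \<and> PC_array q z j1 k2 = None \<and> PC_array q z j2 k1 = None"
    if "j1 \<in> rows q m" "k1 \<in> cols q z m" "j2 \<in> rows q m" "k2 \<in> cols q z m"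
      "(j1, k1) \<noteq> (j2, k2)" "PC_array q z j1 k1 = Some s" "PC_array q z j2 k2 = Some s"
    for j1 k1 j2 k2 s
    using PC_array_exchange[OF assms(3) that(1,3,2,4,5-7)]
      PC_array_exchange[of z q j2 m j1 k2 k1 s] that assms(3) by auto
  show "is_PDA (rows q m) (cols q z m) (PC_array q z)
      ((m * L_of q z + 1) * q) (q ^ m) (z * q ^ (m - 1)) ((q - z) * q ^ m)"
    unfolding is_PDA_def
    using finite_rows finite_cols card_cols card_rows card_column_stars[OF assms(3,4)]
      card_symbols[OF assms(3)] exchange
    by blast
  have "q ^ m = q * q ^ (m - 1)" using assms(4) by (simp add: power_eq_if)
  then show "real (z * q ^ (m - 1)) / real (q ^ m) = real z / real q"
    using assms(1) by (simp add: field_simps)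
  show "real ((q - z) * q ^ m) / real (q ^ m) = real q - real z"
    using assms(1,3) by (simp add: of_nat_diff)
qed

end
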